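(* Let $n\geqslant 2$ and let $\alpha$ be a partial cofinite isometry of $\mathbb{N}^n$. Then for every $i\in\{1,\ldots,n\}$ there exist a unique $j(i)\in\{1,\ldots,n\}$ and an integer $q(i)$ such that $(\mathbf{m}_i)\alpha=(\mathbf{m+q(i)})_{j(i)}$ for every integer $m\geqslant 2$ with $\mathbf{m}_i\in\operatorname{dom}\alpha$. Moreover, the map $i\mapsto j(i)$ is a permutation of the set $\{1,\ldots,n\}$.
   Context: $\mathbb{N}=\{1,2,3,\ldots\}$ and $\mathbb{N}^n$ carries the Euclidean metric $d$. A partial isometry of $\mathbb{N}^n$ is an injective partial map $\alpha\colon\mathbb{N}^n\rightharpoonup\mathbb{N}^n$ with $d((\mathbf{x})\alpha,(\mathbf{y})\alpha)=d(\mathbf{x},\mathbf{y})$ for all $\mathbf{x},\mathbf{y}\in\operatorname{dom}\alpha$; it is cofinite if $\mathbb{N}^n\setminus\operatorname{dom}\alpha$ and $\mathbb{N}^n\setminus\operatorname{ran}\alpha$ are finite. Maps are written on the right. For a positive integer $k$ and $j\in\{1,\ldots,n\}$, $\mathbf{k}_j\in\mathbb{N}^n$ denotes the point whose $j$-th coordinate is $k$ and all other coordinates equal $1$. *)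

theory Defs
  imports Complex_Main "HOL-Combinatorics.Permutations"
begin

text \<open>Points of N^n are represented as functions nat => int, with coordinates indexed
by 1..n, each coordinate at least 1, and value 0 outside 1..n (canonical representative).\<close>

definition Nn :: "nat \<Rightarrow> (nat \<Rightarrow> int) set" where
  "Nn n = {x. (\<forall>l\<in>{1..n}. x l \<ge> 1) \<and> (\<forall>l. l \<notin> {1..n} \<longrightarrow> x l = 0)}"

definition edist :: "nat \<Rightarrow> (nat \<Rightarrow> int) \<Rightarrow> (nat \<Rightarrow> int) \<Rightarrow> real" where
  "edist n x y = sqrt (\<Sum>l\<in>{1..n}. (real_of_int (x l - y l))^2)"

definition partial_isometry :: "nat \<Rightarrow> ((nat \<Rightarrow> int) \<rightharpoonup> (nat \<Rightarrow> int)) \<Rightarrow> bool" where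
  "partial_isometry n \<alpha> \<longleftrightarrow>
     dom \<alpha> \<subseteq> Nn n \<and> ran \<alpha> \<subseteq> Nn n \<and> inj_on \<alpha> (dom \<alpha>) \<and>
     (\<forall>x\<in>dom \<alpha>. \<forall>y\<in>dom \<alpha>. edist n (the (\<alpha> x)) (the (\<alpha> y)) = edist n x y)"

definition cofinite_pmap :: "nat \<Rightarrow> ((nat \<Rightarrow> int) \<rightharpoonup> (nat \<Rightarrow> int)) \<Rightarrow> bool" where
  "cofinite_pmap n \<alpha> \<longleftrightarrow> finite (Nn n - dom \<alpha>) \<and> finite (Nn n - ran \<alpha>)"

definition kpt :: "nat \<Rightarrow> int \<Rightarrow> nat \<Rightarrow> (nat \<Rightarrow> int)" where
  "kpt n k j = (\<lambda>l. if l \<in> {1..n} then (if l = j then k else 1) else 0)"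

end

theory Submission
  imports Defs
begin

text \<open>Restricted to the ray \<open>{m\<^sub>i}\<close>, \<open>\<alpha>\<close> is an isometric embedding of a cofinite subset of \<open>\<int>\<close>
  into \<open>\<int>\<^sup>n\<close>. Equality in the triangle inequality makes it affine, \<open>m \<mapsto> p + m e\<^sub>l\<close>, with the step
  \<open>e\<^sub>l\<close> a positive unit vector because the image stays in \<open>\<nat>\<^sup>n\<close>. All other coordinates of \<open>p\<close> equal
  \<open>1\<close>: if \<open>p\<^sub>k \<ge> 2\<close>, then far out the image of \<open>M\<^sub>i\<close> has \<open>n\<close> lattice neighbours at distance \<open>\<surd>2\<close>
  from the image of \<open>(M - 1)\<^sub>i\<close>, all in the cofinite range of \<open>\<alpha>\<close>, whereas \<open>M\<^sub>i\<close> itself has only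
  \<open>n - 1\<close> such neighbours in \<open>\<nat>\<^sup>n\<close>. Hence rays go to rays, and injectivity of \<open>\<alpha>\<close> makes
  \<open>i \<mapsto> j(i)\<close> injective, hence a permutation.\<close>

definition sqdist :: "nat \<Rightarrow> (nat \<Rightarrow> int) \<Rightarrow> (nat \<Rightarrow> int) \<Rightarrow> int" where
  "sqdist n x y = (\<Sum>l\<in>{1..n}. (x l - y l)^2)"

definition bump :: "(nat \<Rightarrow> int) \<Rightarrow> nat \<Rightarrow> int \<Rightarrow> nat \<Rightarrow> int" where
  "bump x l d = x(l := x l + d)"

lemma edist_eq_sqrt_sqdist: "edist n x y = sqrt (of_int (sqdist n x y))"
  unfolding edist_def sqdist_def by simp

lemma sqdist_commute: "sqdist n x y = sqdist n y x"
  unfolding sqdist_def by (rule sum.cong) (auto simp: power2_commute)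

lemma bump_0 [simp]: "bump x l 0 = x"
  by (simp add: bump_def)

lemma bump_bump_same: "bump (bump x l d) l e = bump x l (d + e)"
  by (simp add: bump_def add.assoc)

lemma bump_inject:
  assumes "bump x a d = bump x b e" "d \<noteq> 0"
  shows "a = b \<and> d = e"
proof -
  have "a = b" using fun_cong[OF assms(1), of a] assms(2) by (auto simp: bump_def split: if_splits)
  then show ?thesis using fun_cong[OF assms(1), of a] by (simp add: bump_def)
qed

lemma sqdist_bump_bump:
  assumes "a \<in> {1..n}" "b \<in> {1..n}"
  shows "sqdist n (bump x a d) (bump x b e) = (if a = b then (d - e)^2 else d^2 + e^2)"
proof (cases "a = b")
  case True
  have "sqdist n (bump x a d) (bump x b e) = (\<Sum>k\<in>{1..n}. if k = a then (d - e)^2 else 0)"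
    unfolding sqdist_def bump_def using True by (intro sum.cong) auto
  with True assms show ?thesis by simp
next
  case False
  have "sqdist n (bump x a d) (bump x b e)
      = (\<Sum>k\<in>{1..n}. (if k = a then d^2 else 0) + (if k = b then e^2 else 0))"
    unfolding sqdist_def bump_def using False by (intro sum.cong) auto
  with False assms show ?thesis by (simp add: sum.distrib)
qed

lemma sqdist_bump: "a \<in> {1..n} \<Longrightarrow> sqdist n (bump x a d) x = d^2"
  using sqdist_bump_bump[of a n a x d 0] by simp

lemma bump_in_Nn: "x \<in> Nn n \<Longrightarrow> a \<in> {1..n} \<Longrightarrow> x a + d \<ge> 1 \<Longrightarrow> bump x a d \<in> Nn n"
  by (auto simp: Nn_def bump_def)

lemma sqdist_eq_1_imp_bump:
  assumes d: "sqdist n x y = 1" and outside: "\<And>k. k \<notin> {1..n} \<Longrightarrow> x k = y k"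
  obtains l s where "l \<in> {1..n}" "s \<in> {1, -1}" "x = bump y l s"
proof -
  have "\<exists>l\<in>{1..n}. x l \<noteq> y l"
  proof (rule ccontr)
    assume "\<not> ?thesis"
    then have "sqdist n x y = 0" unfolding sqdist_def by simp
    with d show False by simp
  qed
  then obtain l where l: "l \<in> {1..n}" "x l \<noteq> y l" by blast
  have split: "sqdist n x y = (x l - y l)^2 + (\<Sum>k\<in>{1..n}-{l}. (x k - y k)^2)"
    unfolding sqdist_def using l(1) by (simp add: sum.remove)
  have "0 < (x l - y l)^2" using l(2) by simp
  moreover have "0 \<le> (\<Sum>k\<in>{1..n}-{l}. (x k - y k)^2)" by (rule sum_nonneg) simp
  ultimately have sq: "(x l - y l)^2 = 1" and rest: "(\<Sum>k\<in>{1..n}-{l}. (x k - y k)^2) = 0"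
    using split d by linarith+
  have "x k = y k" if "k \<in> {1..n}" "k \<noteq> l" for k
    using rest that by (subst (asm) sum_nonneg_eq_0_iff) auto
  moreover note outside
  ultimately have "x k = bump y l (x l - y l) k" for k
    by (cases "k \<in> {1..n}") (auto simp: bump_def)
  then have "x = bump y l (x l - y l)" ..
  with sq l(1) show ?thesis
    using that[of l "x l - y l"] unfolding power2_eq_1_iff by blast
qed

text \<open>Equality case of the triangle inequality, via \<open>\<Sum>(t(y - x) - s(z - y))\<^sup>2 = 0\<close>.\<close>

lemma sqdist_additive_imp_collinear:
  fixes s t :: int
  assumes "sqdist n x y = s^2" "sqdist n y z = t^2" "sqdist n x z = (s + t)^2" "k \<in> {1..n}"
  shows "t * (y k - x k) = s * (z k - y k)"
proof -
  define u where "u k = y k - x k" for k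
  define w where "w k = z k - y k" for k
  let ?S = "{1..n}"
  have A: "(\<Sum>k\<in>?S. (u k)^2) = s^2"
    using assms(1) sqdist_commute[of n x y] unfolding sqdist_def u_def by simp
  have B: "(\<Sum>k\<in>?S. (w k)^2) = t^2"
    using assms(2) sqdist_commute[of n y z] unfolding sqdist_def w_def by simp
  have "sqdist n x z = (\<Sum>k\<in>?S. (u k)^2 + 2 * (u k * w k) + (w k)^2)"
    unfolding sqdist_def u_def w_def by (rule sum.cong) (auto simp: power2_eq_square algebra_simps)
  also have "\<dots> = (\<Sum>k\<in>?S. (u k)^2) + 2 * (\<Sum>k\<in>?S. u k * w k) + (\<Sum>k\<in>?S. (w k)^2)"
    by (simp add: sum.distrib sum_distrib_left)
  finally have C: "(\<Sum>k\<in>?S. u k * w k) = s * t"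
    using A B assms(3) by (simp add: power2_eq_square algebra_simps)
  have "(\<Sum>k\<in>?S. (t * u k - s * w k)^2)
      = t^2 * (\<Sum>k\<in>?S. (u k)^2) - 2 * t * s * (\<Sum>k\<in>?S. u k * w k) + s^2 * (\<Sum>k\<in>?S. (w k)^2)"
    by (simp add: power2_eq_square algebra_simps sum.distrib sum_subtractf sum_distrib_left)
  also have "\<dots> = 0"
    unfolding A B C by (simp add: power2_eq_square algebra_simps)
  finally have "\<forall>k\<in>?S. (t * u k - s * w k)^2 = 0"
    by (subst (asm) sum_nonneg_eq_0_iff) auto
  with assms(4) show ?thesis unfolding u_def w_def by simp
qed

lemma isometric_int_map_affine:
  assumes iso: "\<And>a b. a \<in> D \<Longrightarrow> b \<in> D \<Longrightarrow> sqdist n (f a) (f b) = (a - b)^2"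
    and "m \<in> D" "m + 1 \<in> D" "c \<in> D" "k \<in> {1..n}"
  shows "f c k = f m k + (c - m) * (f (m + 1) k - f m k)"
proof (cases "c \<ge> m + 1")
  case True
  have "(c - m - 1) * (f (m + 1) k - f m k) = 1 * (f c k - f (m + 1) k)"
  proof (rule sqdist_additive_imp_collinear)
    show "sqdist n (f m) (f (m + 1)) = 1^2" using iso assms(2,3) by simp
    show "sqdist n (f (m + 1)) (f c) = (c - m - 1)^2"
      using iso assms(3,4) by (simp add: power2_commute algebra_simps)
    show "sqdist n (f m) (f c) = (1 + (c - m - 1))^2"
      using iso assms(2,4) by (simp add: power2_commute)
  qed fact
  then show ?thesis by (simp add: algebra_simps)
next
  case False
  have "1 * (f m k - f c k) = (m - c) * (f (m + 1) k - f m k)"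
  proof (rule sqdist_additive_imp_collinear)
    show "sqdist n (f c) (f m) = (m - c)^2"
      using iso assms(2,4) by (simp add: power2_commute)
    show "sqdist n (f m) (f (m + 1)) = 1^2" using iso assms(2,3) by simp
    show "sqdist n (f c) (f (m + 1)) = (m - c + 1)^2"
      using iso assms(3,4) by (simp add: power2_commute algebra_simps)
  qed fact
  then show ?thesis by (simp add: algebra_simps)
qed

lemma kpt_apply_same [simp]: "i \<in> {1..n} \<Longrightarrow> kpt n m i i = m"
  by (simp add: kpt_def)

lemma kpt_apply_other [simp]: "k \<in> {1..n} \<Longrightarrow> k \<noteq> i \<Longrightarrow> kpt n m i k = 1"
  by (simp add: kpt_def)

lemma kpt_in_Nn: "m \<ge> 1 \<Longrightarrow> kpt n m i \<in> Nn n"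
  by (auto simp: kpt_def Nn_def)

lemma kpt_add_eq_bump: "i \<in> {1..n} \<Longrightarrow> kpt n (m + d) i = bump (kpt n m i) i d"
  by (auto simp: kpt_def bump_def)

lemma sqdist_kpt_kpt: "i \<in> {1..n} \<Longrightarrow> sqdist n (kpt n a i) (kpt n b i) = (a - b)^2"
  using sqdist_bump[of i n "kpt n b i" "a - b"] kpt_add_eq_bump[of i n b "a - b"] by simp

lemma axis_unit_neighbour:
  assumes i: "i \<in> {1..n}" and z: "z \<in> Nn n"
    and d1: "sqdist n z (kpt n M i) = 1" and d2: "sqdist n z (kpt n (M - 1) i) = 2"
  shows "z \<in> (\<lambda>l. bump (kpt n M i) l 1) ` ({1..n} - {i})"
proof -
  have "z k = kpt n M i k" if "k \<notin> {1..n}" for k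
    using z i that by (auto simp: Nn_def kpt_def)
  with d1 obtain l s where l: "l \<in> {1..n}" and s: "s \<in> {1, -1}" and zl: "z = bump (kpt n M i) l s"
    by (rule sqdist_eq_1_imp_bump)
  have "l \<noteq> i"
  proof
    assume "l = i"
    have "kpt n (M - 1) i = bump (kpt n M i) i (-1)"
      using kpt_add_eq_bump[OF i, of M "-1"] by simp
    then have "sqdist n z (kpt n (M - 1) i) = (s + 1)^2"
      using sqdist_bump_bump[OF l i] zl \<open>l = i\<close> by simp
    with d2 s show False by auto
  qed
  then have "z l = 1 + s"
    using zl l by (simp add: bump_def)
  moreover have "1 \<le> z l"
    using z l by (simp add: Nn_def)
  ultimately have "s = 1" using s by auto
  with zl l \<open>l \<noteq> i\<close> show ?thesis by blast
qed

lemma eventually_at_top_not_in_finite: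
  fixes g :: "int \<Rightarrow> 'a"
  assumes "finite F" "inj g"
  shows "\<forall>\<^sub>F c in at_top. g c \<notin> F"
proof -
  have fin: "finite (g -` F)" using assms by (rule finite_vimageI)
  define B where "B = Max (insert 0 (g -` F))"
  have bound: "c \<le> B" if "g c \<in> F" for c
    using fin that unfolding B_def by auto
  show ?thesis
    using eventually_gt_at_top[of B] by (rule eventually_mono) (use bound in force)
qed

locale cofinite_partial_isometry =
  fixes n :: nat and \<alpha> :: "(nat \<Rightarrow> int) \<rightharpoonup> (nat \<Rightarrow> int)"
  assumes partial_isometry: "partial_isometry n \<alpha>" and cofinite: "cofinite_pmap n \<alpha>"
begin

lemma dom_in_Nn: "x \<in> dom \<alpha> \<Longrightarrow> x \<in> Nn n"
  using partial_isometry unfolding partial_isometry_def by auto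

lemma image_in_Nn: "x \<in> dom \<alpha> \<Longrightarrow> the (\<alpha> x) \<in> Nn n"
  using partial_isometry unfolding partial_isometry_def ran_def by auto

lemma sqdist_image:
  "x \<in> dom \<alpha> \<Longrightarrow> y \<in> dom \<alpha> \<Longrightarrow> sqdist n (the (\<alpha> x)) (the (\<alpha> y)) = sqdist n x y"
  using partial_isometry unfolding partial_isometry_def edist_eq_sqrt_sqdist by auto

lemma eventually_axis_in_dom:
  assumes i: "i \<in> {1..n}"
  shows "\<forall>\<^sub>F c in at_top. kpt n (c + r) i \<in> dom \<alpha>"
proof -
  have "inj (\<lambda>c. kpt n (c + r) i)"
    by (rule injI) (metis add_right_cancel kpt_apply_same[OF i])
  then have "\<forall>\<^sub>F c in at_top. kpt n (c + r) i \<notin> Nn n - dom \<alpha>"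
    using cofinite unfolding cofinite_pmap_def by (intro eventually_at_top_not_in_finite) auto
  then show ?thesis
    using eventually_ge_at_top[of "1 - r"] by eventually_elim (auto intro: kpt_in_Nn)
qed

lemma eventually_in_ran:
  fixes g :: "int \<Rightarrow> nat \<Rightarrow> int"
  assumes "inj g" "\<forall>\<^sub>F c in at_top. g c \<in> Nn n"
  shows "\<forall>\<^sub>F c in at_top. g c \<in> ran \<alpha>"
proof -
  have "\<forall>\<^sub>F c in at_top. g c \<notin> Nn n - ran \<alpha>"
    using cofinite assms(1) unfolding cofinite_pmap_def by (intro eventually_at_top_not_in_finite) auto
  with assms(2) show ?thesis by eventually_elim auto
qed

text \<open>By \<open>axis_unit_neighbour\<close>, pulling back along \<open>\<alpha>\<close> injects such a set of common neighbours
  into an \<open>(n - 1)\<close>-element set.\<close>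

lemma card_axis_neighbours_less:
  assumes i: "i \<in> {1..n}" and M: "kpt n M i \<in> dom \<alpha>" "kpt n (M - 1) i \<in> dom \<alpha>"
    and S: "S \<subseteq> ran \<alpha>"
    and dist: "\<And>y. y \<in> S \<Longrightarrow> sqdist n y (the (\<alpha> (kpt n M i))) = 1
                             \<and> sqdist n y (the (\<alpha> (kpt n (M - 1) i))) = 2"
  shows "card S < n"
proof -
  define pre where "pre y = (SOME x. \<alpha> x = Some y)" for y
  have pre: "\<alpha> (pre y) = Some y" if y: "y \<in> S" for y
  proof -
    obtain x where "\<alpha> x = Some y" using S y by (auto simp: ran_def)
    then show ?thesis unfolding pre_def by (rule someI[where P = "\<lambda>x. \<alpha> x = Some y"])
  qed
  have "inj_on pre S"
    by (rule inj_onI) (metis option.inject pre)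
  moreover have "pre ` S \<subseteq> (\<lambda>l. bump (kpt n M i) l 1) ` ({1..n} - {i})"
  proof
    fix x assume "x \<in> pre ` S"
    then obtain y where y: "y \<in> S" "x = pre y" by blast
    then have x: "x \<in> dom \<alpha>" "the (\<alpha> x) = y" using pre by auto
    show "x \<in> (\<lambda>l. bump (kpt n M i) l 1) ` ({1..n} - {i})"
    proof (rule axis_unit_neighbour[OF i dom_in_Nn[OF x(1)]])
      show "sqdist n x (kpt n M i) = 1" "sqdist n x (kpt n (M - 1) i) = 2"
        using dist[OF y(1)] sqdist_image[OF x(1) M(1)] sqdist_image[OF x(1) M(2)] x(2) by auto
    qed
  qed
  ultimately have "card S \<le> card ((\<lambda>l. bump (kpt n M i) l 1) ` ({1..n} - {i}))"
    by (intro card_inj_on_le) auto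
  also have "\<dots> \<le> card ({1..n} - {i})" by (rule card_image_le) simp
  also have "\<dots> < n" using i by simp
  finally show ?thesis .
qed

lemma axis_image_affine:
  assumes i: "i \<in> {1..n}"
  obtains l p where "l \<in> {1..n}"
    "\<And>c. kpt n c i \<in> dom \<alpha> \<Longrightarrow> \<alpha> (kpt n c i) = Some (bump p l c)"
proof -
  define f where "f c = the (\<alpha> (kpt n c i))" for c
  define D where "D = {c. kpt n c i \<in> dom \<alpha>}"
  have iso: "sqdist n (f a) (f b) = (a - b)^2" if "a \<in> D" "b \<in> D" for a b
    using sqdist_image that sqdist_kpt_kpt[OF i] unfolding f_def D_def by simp
  have f_Nn: "f c \<in> Nn n" if "c \<in> D" for c
    using image_in_Nn that unfolding f_def D_def by simp
  obtain m where m: "m \<in> D" "m + 1 \<in> D"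
    using eventually_happens'[OF trivial_limit_at_top_linorder
        eventually_conj[OF eventually_axis_in_dom[OF i, of 0] eventually_axis_in_dom[OF i, of 1]]]
    unfolding D_def by auto
  have "sqdist n (f (m + 1)) (f m) = 1" using iso[OF m(2) m(1)] by simp
  moreover have "f (m + 1) k = f m k" if "k \<notin> {1..n}" for k
    using f_Nn[OF m(1)] f_Nn[OF m(2)] that by (simp add: Nn_def)
  ultimately obtain l s where l: "l \<in> {1..n}" and s: "s \<in> {1, -1}"
    and step: "f (m + 1) = bump (f m) l s"
    by (rule sqdist_eq_1_imp_bump)
  have line: "f c = bump (f m) l ((c - m) * s)" if c: "c \<in> D" for c
  proof
    fix k show "f c k = bump (f m) l ((c - m) * s) k"
    proof (cases "k \<in> {1..n}")
      case True
      then show ?thesis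
        using isometric_int_map_affine[OF iso m c True] step by (simp add: bump_def)
    next
      case False
      then show ?thesis
        using f_Nn[OF c] f_Nn[OF m(1)] l by (auto simp: Nn_def bump_def)
    qed
  qed
  have "s = 1"
  proof (rule ccontr)
    assume "s \<noteq> 1"
    with s have "s = -1" by simp
    obtain c where c: "c \<in> D" "c > f m l + m"
      using eventually_happens'[OF trivial_limit_at_top_linorder
          eventually_conj[OF eventually_axis_in_dom[OF i, of 0] eventually_gt_at_top[of "f m l + m"]]]
      unfolding D_def by auto
    have "f c l = f m l - (c - m)" using line[OF c(1)] \<open>s = -1\<close> by (simp add: bump_def)
    moreover have "f c l \<ge> 1" using f_Nn[OF c(1)] l by (simp add: Nn_def)
    ultimately show False using c(2) by linarith
  qed
  show ?thesis
  proof (rule that[OF l])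
    fix c assume c: "kpt n c i \<in> dom \<alpha>"
    then have "f c = bump (bump (f m) l (-m)) l c"
      using line \<open>s = 1\<close> unfolding D_def by (simp add: bump_bump_same)
    with c show "\<alpha> (kpt n c i) = Some (bump (bump (f m) l (-m)) l c)"
      unfolding f_def by auto
  qed
qed

lemma axis_image_offset:
  assumes i: "i \<in> {1..n}" and l: "l \<in> {1..n}"
    and ray: "\<And>c. kpt n c i \<in> dom \<alpha> \<Longrightarrow> \<alpha> (kpt n c i) = Some (bump p l c)"
    and k: "k \<in> {1..n}" "k \<noteq> l"
  shows "p k = 1"
proof -
  have ray_Nn: "bump p l c \<in> Nn n" if "kpt n c i \<in> dom \<alpha>" for c
    using image_in_Nn[OF that] ray[OF that] by simp
  obtain c0 where "kpt n c0 i \<in> dom \<alpha>"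
    using eventually_happens'[OF trivial_limit_at_top_linorder eventually_axis_in_dom[OF i, of 0]]
    by auto
  from ray_Nn[OF this] k(1) have "bump p l c0 k \<ge> 1" by (simp add: Nn_def)
  with k(2) have "p k \<ge> 1" by (simp add: bump_def)
  show ?thesis
  proof (rule ccontr)
    assume "p k \<noteq> 1"
    with \<open>p k \<ge> 1\<close> have pk: "p k \<ge> 2" by simp
    define h where "h M l' = (if l' = l then bump (bump p l M) k (-1) else bump (bump p l M) l' 1)"
      for M l'
    have h_Nn: "h M l' \<in> Nn n" if M: "kpt n M i \<in> dom \<alpha>" and l': "l' \<in> {1..n}" for M l'
    proof -
      have "bump p l M l' \<ge> 1" using ray_Nn[OF M] l' by (simp add: Nn_def)
      moreover have "bump p l M k = p k" using k(2) by (simp add: bump_def)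
      ultimately show ?thesis
        using bump_in_Nn[OF ray_Nn[OF M]] k(1) l' pk unfolding h_def by simp
    qed
    have h_l: "h M l' l = p l + M" for M l'
      using k(2) by (simp add: h_def bump_def)
    have "\<forall>\<^sub>F M in at_top. h M l' \<in> ran \<alpha>" if l': "l' \<in> {1..n}" for l'
    proof (rule eventually_in_ran)
      show "inj (\<lambda>M. h M l')"
        by (rule injI) (metis h_l add_left_cancel)
      show "\<forall>\<^sub>F M in at_top. h M l' \<in> Nn n"
        using eventually_axis_in_dom[OF i, of 0] by eventually_elim (use h_Nn l' in simp)
    qed
    then have "\<forall>\<^sub>F M in at_top. (\<forall>l'\<in>{1..n}. h M l' \<in> ran \<alpha>)
        \<and> kpt n (M + 0) i \<in> dom \<alpha> \<and> kpt n (M + -1) i \<in> dom \<alpha>"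
      by (intro eventually_conj eventually_ball_finite eventually_axis_in_dom[OF i]) auto
    then obtain M where M: "\<forall>l'\<in>{1..n}. h M l' \<in> ran \<alpha>"
      "kpt n M i \<in> dom \<alpha>" "kpt n (M - 1) i \<in> dom \<alpha>"
      using eventually_happens'[OF trivial_limit_at_top_linorder] by fastforce
    have "inj_on (h M) {1..n}"
      by (rule inj_onI) (auto simp: h_def split: if_splits dest: bump_inject)
    then have "card (h M ` {1..n}) = n" by (simp add: card_image)
    moreover have "card (h M ` {1..n}) < n"
    proof (rule card_axis_neighbours_less[OF i M(2,3)])
      show "h M ` {1..n} \<subseteq> ran \<alpha>" using M(1) by auto
    next
      fix y assume "y \<in> h M ` {1..n}"
      then obtain l' where l': "l' \<in> {1..n}" and y: "y = h M l'" by blast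
      have "the (\<alpha> (kpt n M i)) = bump p l M"
        and "the (\<alpha> (kpt n (M - 1) i)) = bump (bump p l M) l (-1)"
        using ray M(2,3) by (simp_all add: bump_bump_same)
      moreover have "sqdist n y (bump p l M) = 1 \<and> sqdist n y (bump (bump p l M) l (-1)) = 2"
        using sqdist_bump_bump[OF k(1) l] sqdist_bump_bump[OF l' l] sqdist_bump[OF k(1)]
          sqdist_bump[OF l'] k(2)
        unfolding y h_def by simp
      ultimately show "sqdist n y (the (\<alpha> (kpt n M i))) = 1
          \<and> sqdist n y (the (\<alpha> (kpt n (M - 1) i))) = 2"
        by simp
    qed
    ultimately show False by simp
  qed
qed

lemma axis_image_on_axis:
  assumes i: "i \<in> {1..n}"
  obtains j q where "j \<in> {1..n}"
    "\<And>c. kpt n c i \<in> dom \<alpha> \<Longrightarrow> \<alpha> (kpt n c i) = Some (kpt n (c + q) j)"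
proof -
  obtain l p where l: "l \<in> {1..n}"
    and ray: "\<And>c. kpt n c i \<in> dom \<alpha> \<Longrightarrow> \<alpha> (kpt n c i) = Some (bump p l c)"
    using axis_image_affine[OF i] by blast
  obtain c0 where c0: "kpt n c0 i \<in> dom \<alpha>"
    using eventually_happens'[OF trivial_limit_at_top_linorder eventually_axis_in_dom[OF i, of 0]]
    by auto
  have "bump p l c0 \<in> Nn n" using image_in_Nn[OF c0] ray[OF c0] by simp
  then have outside: "p t = 0" if "t \<notin> {1..n}" for t
    using that l by (auto simp: Nn_def bump_def split: if_splits)
  have "bump p l c = kpt n (c + p l) l" for c
  proof
    fix t show "bump p l c t = kpt n (c + p l) l t"
      using l outside[of t] axis_image_offset[OF i l ray, of t] by (auto simp: bump_def kpt_def)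
  qed
  with l ray that show ?thesis by metis
qed

definition maps_axis :: "nat \<Rightarrow> nat \<Rightarrow> int \<Rightarrow> bool" where
  "maps_axis i j q \<longleftrightarrow> (\<forall>m::int. m \<ge> 2 \<longrightarrow> kpt n m i \<in> dom \<alpha> \<longrightarrow>
      \<alpha> (kpt n m i) = Some (kpt n (m + q) j))"

lemma maps_axis_target_unique:
  assumes i: "i \<in> {1..n}" and j: "j \<in> {1..n}" "j' \<in> {1..n}"
    and maps: "maps_axis i j q" "maps_axis i j' q'"
  shows "j = j'"
proof (rule ccontr)
  assume "j \<noteq> j'"
  obtain m where m: "kpt n (m + 0) i \<in> dom \<alpha>" "m \<ge> max 2 (2 - q)"
    using eventually_happens'[OF trivial_limit_at_top_linorder
        eventually_conj[OF eventually_axis_in_dom[OF i] eventually_ge_at_top]]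
    by blast
  then have "kpt n (m + q) j = kpt n (m + q') j'"
    using maps unfolding maps_axis_def by auto
  then have "kpt n (m + q) j j = kpt n (m + q') j' j" by simp
  with j \<open>j \<noteq> j'\<close> m(2) show False by simp
qed

lemma maps_axis_source_unique:
  assumes i: "i \<in> {1..n}" "i' \<in> {1..n}" and maps: "maps_axis i j q" "maps_axis i' j q'"
  shows "i = i'"
proof (rule ccontr)
  assume "i \<noteq> i'"
  have "\<forall>\<^sub>F c in at_top. (kpt n (c + 0) i \<in> dom \<alpha> \<and> kpt n (c + (q - q')) i' \<in> dom \<alpha>)
      \<and> c \<ge> max 2 (2 - (q - q'))"
    by (intro eventually_conj eventually_axis_in_dom i eventually_ge_at_top)
  then obtain c where c: "kpt n c i \<in> dom \<alpha>" "kpt n (c + (q - q')) i' \<in> dom \<alpha>"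
    "c \<ge> 2" "c + (q - q') \<ge> 2"
    using eventually_happens'[OF trivial_limit_at_top_linorder] by fastforce
  then have "\<alpha> (kpt n c i) = \<alpha> (kpt n (c + (q - q')) i')"
    using maps unfolding maps_axis_def by auto
  with c(1,2) have "kpt n c i = kpt n (c + (q - q')) i'"
    using partial_isometry unfolding partial_isometry_def by (blast dest: inj_onD)
  then have "kpt n c i i = kpt n (c + (q - q')) i' i" by simp
  with i \<open>i \<noteq> i'\<close> c(3) show False by simp
qed

end

theorem lemma2p6:
  fixes n :: nat and \<alpha> :: "(nat \<Rightarrow> int) \<rightharpoonup> (nat \<Rightarrow> int)"
  assumes "n \<ge> 2"
    and "partial_isometry n \<alpha>"
    and "cofinite_pmap n \<alpha>"
  shows "(\<forall>i\<in>{1..n}. \<exists>!j. j \<in> {1..n} \<and>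
            (\<exists>q::int. \<forall>m::int. m \<ge> 2 \<longrightarrow> kpt n m i \<in> dom \<alpha> \<longrightarrow>
                \<alpha> (kpt n m i) = Some (kpt n (m + q) j)))
       \<and> (\<exists>\<sigma>. \<sigma> permutes {1..n} \<and>
            (\<forall>i\<in>{1..n}. \<exists>q::int. \<forall>m::int. m \<ge> 2 \<longrightarrow> kpt n m i \<in> dom \<alpha> \<longrightarrow>
                \<alpha> (kpt n m i) = Some (kpt n (m + q) (\<sigma> i))))"
proof -
  interpret cofinite_partial_isometry n \<alpha>
    using assms(2,3) by unfold_locales
  have "\<exists>j. j \<in> {1..n} \<and> (\<exists>q. maps_axis i j q)" if "i \<in> {1..n}" for i
    using axis_image_on_axis[OF that] unfolding maps_axis_def by metis
  then obtain \<tau> where \<tau>_in: "\<And>i. i \<in> {1..n} \<Longrightarrow> \<tau> i \<in> {1..n}"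
    and \<tau>_maps: "\<And>i. i \<in> {1..n} \<Longrightarrow> \<exists>q. maps_axis i (\<tau> i) q"
    by metis
  define \<sigma> where "\<sigma> i = (if i \<in> {1..n} then \<tau> i else i)" for i
  have "\<sigma> permutes {1..n}"
  proof (rule inj_imp_permutes)
    show "inj_on \<sigma> {1..n}"
    proof (rule inj_onI)
      fix a b assume a: "a \<in> {1..n}" and b: "b \<in> {1..n}" and "\<sigma> a = \<sigma> b"
      then have "\<tau> a = \<tau> b" by (simp add: \<sigma>_def)
      with \<tau>_maps[OF a] \<tau>_maps[OF b] show "a = b"
        using maps_axis_source_unique[OF a b] by auto
    qed
    show "\<sigma> x \<in> {1..n}" if "x \<in> {1..n}" for x
      using that \<tau>_in[OF that] by (simp add: \<sigma>_def)
    show "\<sigma> x = x" if "x \<notin> {1..n}" for x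
      using that unfolding \<sigma>_def by argo
  qed simp
  moreover have "\<forall>i\<in>{1..n}. \<exists>q. maps_axis i (\<sigma> i) q"
    using \<tau>_maps by (simp add: \<sigma>_def)
  moreover have "\<exists>!j. j \<in> {1..n} \<and> (\<exists>q. maps_axis i j q)" if "i \<in> {1..n}" for i
    using \<tau>_in[OF that] \<tau>_maps[OF that] maps_axis_target_unique[OF that] by blast
  ultimately show ?thesis
    unfolding maps_axis_def[symmetric] by blast
qed

end
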